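(* In the setting of the context, let $$f_P=\frac{\operatorname{tr}^3((\boldsymbol T\boldsymbol V_N)^2)}{\operatorname{tr}^2((\boldsymbol T\boldsymbol V_N)^3)},\qquad K_{f_P}=\frac{\chi^2_{f_P}-f_P}{\sqrt{2f_P}},$$ where $\chi^2_{f_P}$ denotes a chi-square random variable with $f_P$ degrees of freedom. Let $\lambda_1\ge\dots\ge\lambda_{ad}$ be the eigenvalues of $\boldsymbol T\boldsymbol V_N\boldsymbol T$ and $\beta_1=\lambda_1/\sqrt{\sum_\ell\lambda_\ell^2}$. Under $H_0:\boldsymbol T\boldsymbol\mu=\mathbf 0$ and any one of the frameworks (F1)–(F3), as $N\to\infty$: (a) if $\beta_1\to0$, $K_{f_P}$ converges in distribution to $\mathcal N(0,1)$; (b) if $\beta_1\to1$, $K_{f_P}$ converges in distribution to $(C-1)/\sqrt2$ with $C\sim\chi^2_1$.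
   Context: Let $a,d\in\mathbb N$, $n_1,\dots,n_a\in\mathbb N$, $N=\sum_i n_i$. Observations $\boldsymbol X_{i,j}\sim\mathcal N_d(\boldsymbol\mu_i,\boldsymbol\Sigma_i)$, $j=1,\dots,n_i$, $i=1,\dots,a$, are mutually independent, $\boldsymbol\Sigma_i$ symmetric positive definite, $\boldsymbol\mu=(\boldsymbol\mu_1^\top,\dots,\boldsymbol\mu_a^\top)^\top$. Let $\boldsymbol T=\boldsymbol T_W\otimes\boldsymbol T_S$ with $\boldsymbol T_W\in\mathbb R^{a\times a}$, $\boldsymbol T_S\in\mathbb R^{d\times d}$ symmetric idempotent, and $\boldsymbol V_N=\bigoplus_{i=1}^a\frac N{n_i}\boldsymbol\Sigma_i$. Asymptotics: $N\to\infty$, $a,d,n_i$ may depend on $N$, $n_i/N\to\rho_i\in(0,1)$, and one of: (F1) $a$ fixed, $\min(d,n_1,\dots,n_a)\to\infty$; (F2) $d$ fixed, $\min(a,n_1,\dots,n_a)\to\infty$; (F3) $\min(a,d,n_1,\dots,n_a)\to\infty$. *)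

theory Defs
  imports "HOL-Probability.Probability" "Jordan_Normal_Form.Matrix" "Jordan_Normal_Form.Char_Poly"
begin

definition mat_trace :: "real mat \<Rightarrow> real" where
  "mat_trace A = (\<Sum>i<dim_row A. A $$ (i, i))"

definition kron :: "real mat \<Rightarrow> real mat \<Rightarrow> real mat" where
  "kron A B = mat (dim_row A * dim_row B) (dim_col A * dim_col B)
     (\<lambda>(i, j). A $$ (i div dim_row B, j div dim_col B) * B $$ (i mod dim_row B, j mod dim_col B))"

definition sym_mat :: "real mat \<Rightarrow> bool" where
  "sym_mat A \<longleftrightarrow> transpose_mat A = A"

definition sym_idempotent :: "nat \<Rightarrow> real mat \<Rightarrow> bool" where
  "sym_idempotent m A \<longleftrightarrow> A \<in> carrier_mat m m \<and> sym_mat A \<and> A * A = A"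

definition pos_def_mat :: "nat \<Rightarrow> real mat \<Rightarrow> bool" where
  "pos_def_mat m A \<longleftrightarrow> A \<in> carrier_mat m m \<and> sym_mat A \<and>
     (\<forall>v \<in> carrier_vec m. v \<noteq> 0\<^sub>v m \<longrightarrow> v \<bullet> (A *\<^sub>v v) > 0)"

text \<open>Eigenvalues (with multiplicity, i.e. roots of the characteristic polynomial),
  listed in non-increasing order; meaningful for real symmetric matrices.\<close>
definition eigs_desc :: "real mat \<Rightarrow> real list" where
  "eigs_desc A = (SOME ls. sorted_wrt (\<ge>) ls \<and> length ls = dim_row A \<and>
      char_poly A = (\<Prod>l\<leftarrow>ls. [:- l, 1:]))"

definition beta1 :: "real mat \<Rightarrow> real" where
  "beta1 A = hd (eigs_desc A) / sqrt (\<Sum>l\<leftarrow>eigs_desc A. l\<^sup>2)"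

definition chi_sq_density :: "real \<Rightarrow> real \<Rightarrow> real" where
  "chi_sq_density f x = (if x > 0 then x powr (f / 2 - 1) * exp (- x / 2) / (2 powr (f / 2) * Gamma (f / 2)) else 0)"

definition chi_sq_law :: "real \<Rightarrow> real measure" where
  "chi_sq_law f = density lborel (\<lambda>x. ennreal (chi_sq_density f x))"

definition K_law :: "real \<Rightarrow> real measure" where
  "K_law f = distr (chi_sq_law f) borel (\<lambda>x. (x - f) / sqrt (2 * f))"

definition V_mat :: "nat \<Rightarrow> (nat \<Rightarrow> nat) \<Rightarrow> (nat \<Rightarrow> real mat) \<Rightarrow> real mat" where
  "V_mat a n Sig = diag_block_mat
     (map (\<lambda>i. (real (\<Sum>j<a. n j) / real (n i)) \<cdot>\<^sub>m Sig i) [0..<a])"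

definition f_P :: "real mat \<Rightarrow> real mat \<Rightarrow> real" where
  "f_P T V = (mat_trace ((T * V) * (T * V))) ^ 3 / (mat_trace ((T * V) * (T * V) * (T * V))) ^ 2"

definition stack_vec :: "nat \<Rightarrow> nat \<Rightarrow> (nat \<Rightarrow> real vec) \<Rightarrow> real vec" where
  "stack_vec a d mu = vec (a * d) (\<lambda>j. mu (j div d) $ (j mod d))"

end

theory Submission
  imports Defs "Jordan_Normal_Form.Schur_Decomposition" "HOL-Real_Asymp.Real_Asymp"
begin

no_notation vec_nth (infixl "$" 90)
no_notation inner (infix "\<bullet>" 70)

text \<open>Let \<open>A = T V\<^sub>N T\<close> with eigenvalues \<open>\<lambda>\<^sub>1 \<ge> ... \<ge> \<lambda>\<^sub>a\<^sub>d\<close>. Since \<open>T\<close> is a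
  nonzero orthogonal projection and \<open>V\<^sub>N\<close> is positive definite, \<open>A\<close> is a nonzero positive
  semidefinite symmetric matrix, and idempotence of \<open>T\<close> gives \<open>tr ((T V\<^sub>N)^k) = tr (A^k)\<close>, so
  \<open>f\<^sub>P = (\<Sum>\<lambda>\<^sup>2)\<^sup>3 / (\<Sum>\<lambda>\<^sup>3)\<^sup>2\<close>. From \<open>0 \<le> \<lambda>\<^sub>l \<le> \<lambda>\<^sub>1\<close> we get
  \<open>\<lambda>\<^sub>1\<^sup>3 \<le> \<Sum>\<lambda>\<^sup>3 \<le> \<lambda>\<^sub>1 \<Sum>\<lambda>\<^sup>2\<close>, i.e. \<open>\<beta>\<^sub>1\<^sup>-\<^sup>2 \<le> f\<^sub>P \<le> \<beta>\<^sub>1\<^sup>-\<^sup>6\<close>.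
  Hence \<open>\<beta>\<^sub>1 \<rightarrow> 0\<close> forces \<open>f\<^sub>P \<rightarrow> \<infinity>\<close> and \<open>\<beta>\<^sub>1 \<rightarrow> 1\<close> forces \<open>f\<^sub>P \<rightarrow> 1\<close>,
  and the theorem becomes a statement about the family \<open>K\<^sub>f\<close>:
  the distribution function of \<open>K\<^sub>f\<close> is continuous in \<open>f > 0\<close> (dominated convergence under an
  envelope built from two chi-square densities), and \<open>K\<^sub>f\<close> is asymptotically standard normal as
  \<open>f \<rightarrow> \<infinity>\<close>: after the substitution \<open>t = f + sqrt (2 f) y\<close> its density is proportional to
  \<open>(1 + y / sqrt m) powr (m - 1) * exp (- sqrt m * y)\<close> with \<open>m = f / 2\<close>, which tends to
  \<open>exp (- y\<^sup>2 / 2)\<close> under the integrable bound \<open>exp (2 - \<bar>y\<bar> / 4)\<close>.\<close>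

section \<open>Traces and spectra of symmetric matrices\<close>

lemma mat_trace_mult_eq_sum:
  assumes "A \<in> carrier_mat n m" "B \<in> carrier_mat m n"
  shows "mat_trace (A * B) = (\<Sum>i<n. \<Sum>j<m. A $$ (i, j) * B $$ (j, i))"
  using assms by (auto simp: mat_trace_def scalar_prod_def atLeast0LessThan intro!: sum.cong)

lemma mat_trace_mult_comm:
  assumes "A \<in> carrier_mat n m" "B \<in> carrier_mat m n"
  shows "mat_trace (A * B) = mat_trace (B * A)"
  by (simp add: mat_trace_mult_eq_sum[OF assms] mat_trace_mult_eq_sum[OF assms(2,1)]
      sum.swap[of _ "{..<n}"] mult.commute)

lemma mat_trace_similar:
  assumes P: "P \<in> carrier_mat n n" and Q: "Q \<in> carrier_mat n n" and QP: "Q * P = 1\<^sub>m n"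
    and X: "X \<in> carrier_mat n n"
  shows "mat_trace (P * X * Q) = mat_trace X"
proof -
  have "mat_trace (P * X * Q) = mat_trace (Q * (P * X))"
    by (rule mat_trace_mult_comm[of _ n n]) (use X P Q in auto)
  also have "Q * (P * X) = X"
    using X P Q by (simp add: QP flip: assoc_mult_mat[of Q n n P n X n])
  finally show ?thesis .
qed

lemma upper_triangular_mult_term_zero:
  fixes B C :: "'a::semiring_0 mat"
  assumes "B \<in> carrier_mat n n" "C \<in> carrier_mat n n"
    and "upper_triangular B" "upper_triangular C"
    and "i < n" "k < n" "\<not> (i \<le> k \<and> k \<le> j)"
  shows "B $$ (i, k) * C $$ (k, j) = 0"
proof (cases "k < i")
  case True
  then show ?thesis using assms upper_triangularD[of B k i] by auto
next
  case False
  then show ?thesis using assms upper_triangularD[of C j k] by auto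
qed

lemma upper_triangular_mult:
  fixes B C :: "'a::semiring_0 mat"
  assumes B: "B \<in> carrier_mat n n" and C: "C \<in> carrier_mat n n"
    and uB: "upper_triangular B" and uC: "upper_triangular C"
  shows "upper_triangular (B * C)"
proof
  fix i j assume "j < i" "i < dim_row (B * C)"
  then show "(B * C) $$ (i, j) = 0"
    using B C upper_triangular_mult_term_zero[OF B C uB uC]
    by (auto simp: scalar_prod_def intro!: sum.neutral)
qed

lemma diag_upper_triangular_mult:
  fixes B C :: "'a::semiring_0 mat"
  assumes B: "B \<in> carrier_mat n n" and C: "C \<in> carrier_mat n n"
    and uB: "upper_triangular B" and uC: "upper_triangular C" and i: "i < n"
  shows "(B * C) $$ (i, i) = B $$ (i, i) * C $$ (i, i)"
proof -
  have "(B * C) $$ (i, i) = (\<Sum>k\<in>{0..<n}. B $$ (i, k) * C $$ (k, i))"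
    using B C i by (simp add: scalar_prod_def)
  also have "\<dots> = B $$ (i, i) * C $$ (i, i) + (\<Sum>k\<in>{0..<n} - {i}. B $$ (i, k) * C $$ (k, i))"
    using i by (subst sum.remove[of _ i]) auto
  also have "(\<Sum>k\<in>{0..<n} - {i}. B $$ (i, k) * C $$ (k, i)) = 0"
    using upper_triangular_mult_term_zero[OF B C uB uC i] by (intro sum.neutral) auto
  finally show ?thesis by simp
qed

lemma upper_triangular_pow_mat:
  fixes B :: "'a::comm_semiring_1 mat"
  assumes B: "B \<in> carrier_mat n n" and uB: "upper_triangular B"
  shows "upper_triangular (B ^\<^sub>m k) \<and> (\<forall>i<n. (B ^\<^sub>m k) $$ (i, i) = B $$ (i, i) ^ k)"
proof (induction k)
  case 0
  show ?case using B by auto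
next
  case (Suc k)
  then show ?case
    using upper_triangular_mult[OF _ B _ uB] diag_upper_triangular_mult[OF _ B _ uB] B
    by (simp add: mult.commute)
qed

lemma mat_trace_pow_eq_sum_eigenvalues:
  fixes A :: "real mat"
  assumes A: "A \<in> carrier_mat n n" and ls: "char_poly A = (\<Prod>l\<leftarrow>ls. [:- l, 1:])"
  shows "mat_trace (A ^\<^sub>m k) = (\<Sum>l\<leftarrow>ls. l ^ k)"
proof -
  obtain B P Q where BPQ: "schur_decomposition A ls = (B, P, Q)"
    by (cases "schur_decomposition A ls") auto
  from schur_decomposition[OF A ls BPQ] have sim: "similar_mat_wit A B P Q"
    and uB: "upper_triangular B" and diag: "diag_mat B = ls" by auto
  from sim A have B: "B \<in> carrier_mat n n" and P: "P \<in> carrier_mat n n"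
    and Q: "Q \<in> carrier_mat n n" and QP: "Q * P = 1\<^sub>m n"
    unfolding similar_mat_wit_def Let_def by auto
  have "mat_trace (A ^\<^sub>m k) = mat_trace (B ^\<^sub>m k)"
    unfolding similar_mat_wit_pow_id[OF sim] using B by (intro mat_trace_similar[OF P Q QP]) auto
  also have "\<dots> = (\<Sum>i<n. B $$ (i, i) ^ k)"
    using upper_triangular_pow_mat[OF B uB] B by (simp add: mat_trace_def)
  also have "\<dots> = (\<Sum>l\<leftarrow>ls. l ^ k)"
    using B by (simp add: diag[symmetric] diag_mat_def sum_list_sum_nth atLeast0LessThan)
  finally show ?thesis .
qed

lemma real_eigenvalue_of_sym_mat:
  fixes A :: "real mat"
  assumes A: "A \<in> carrier_mat n n" and S: "sym_mat A"
    and ev: "eigenvector (map_mat complex_of_real A) v \<mu>"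
  shows "Im \<mu> = 0"
proof -
  from ev A have v: "v \<in> carrier_vec n" and v0: "v \<noteq> 0\<^sub>v n"
    and Av: "map_mat complex_of_real A *\<^sub>v v = \<mu> \<cdot>\<^sub>v v"
    unfolding eigenvector_def by auto
  have sym: "A $$ (i, j) = A $$ (j, i)" if "i < n" "j < n" for i j
    using arg_cong[OF S[unfolded sym_mat_def], of "\<lambda>M. M $$ (j, i)"] that A by auto
  have row: "(\<Sum>j<n. of_real (A $$ (i, j)) * v $ j) = \<mu> * v $ i" if i: "i < n" for i
    using arg_cong[OF Av, of "\<lambda>w. w $ i"] i A v by (simp add: scalar_prod_def atLeast0LessThan)
  define s where "s = (\<Sum>i<n. cnj (v $ i) * (\<Sum>j<n. of_real (A $$ (i, j)) * v $ j))"
  define N where "N = (\<Sum>i<n. cnj (v $ i) * v $ i)"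
  have s_eq: "s = \<mu> * N"
    unfolding s_def N_def using row by (simp add: sum_distrib_left mult_ac)
  \<comment> \<open>The Hermitian form of a real symmetric matrix is real.\<close>
  have "cnj s = (\<Sum>i<n. \<Sum>j<n. v $ i * of_real (A $$ (i, j)) * cnj (v $ j))"
    unfolding s_def by (simp add: cnj_sum sum_distrib_left mult_ac)
  also have "\<dots> = (\<Sum>j<n. \<Sum>i<n. v $ i * of_real (A $$ (i, j)) * cnj (v $ j))"
    by (rule sum.swap)
  also have "\<dots> = s"
    unfolding s_def sum_distrib_left by (intro sum.cong refl) (simp add: sym mult_ac)
  finally have "cnj s = s" .
  then have "Im (cnj s) = Im s" by simp
  then have Im_s: "Im s = 0" by simp
  have Im_N: "Im N = 0" unfolding N_def by (simp add: Im_sum)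
  obtain i where i: "i < n" "v $ i \<noteq> 0"
    using v v0 by (metis eq_vecI carrier_vecD index_zero_vec(1,2))
  have "Re N > 0"
    unfolding N_def Re_sum
    using i complex_neq_0 by (intro sum_pos2[of _ i]) (auto simp: power2_eq_square)
  moreover have "Im \<mu> * Re N = 0" using Im_s Im_N s_eq by simp
  ultimately show ?thesis by simp
qed

lemma map_poly_of_real_prod_linear:
  "map_poly (of_real :: real \<Rightarrow> complex) (\<Prod>l\<leftarrow>ls. [:- l, 1:]) = (\<Prod>l\<leftarrow>ls. [:- of_real l, 1:])"
proof -
  interpret of_real_poly: map_poly_comm_ring_hom "of_real :: real \<Rightarrow> complex" ..
  show ?thesis
    by (induct ls) (simp_all add: of_real_poly.hom_mult del: mult_pCons_left pCons_0_as_mult)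
qed

lemma map_poly_of_real_inj:
  "map_poly (of_real :: real \<Rightarrow> complex) p = map_poly of_real q \<Longrightarrow> p = q"
proof -
  interpret of_real_poly: map_poly_inj_comm_ring_hom "of_real :: real \<Rightarrow> complex" ..
  show "map_poly (of_real :: real \<Rightarrow> complex) p = map_poly of_real q \<Longrightarrow> p = q" by simp
qed

lemma sym_mat_char_poly_splits:
  fixes A :: "real mat"
  assumes A: "A \<in> carrier_mat n n" and S: "sym_mat A"
  shows "\<exists>ls. length ls = n \<and> char_poly A = (\<Prod>l\<leftarrow>ls. [:- l, 1:])"
proof -
  let ?C = "map_mat complex_of_real A"
  have C: "?C \<in> carrier_mat n n" using A by simp
  obtain cs where cs: "char_poly ?C = (\<Prod>c\<leftarrow>cs. [:- c, 1:])" "length cs = n"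
    using char_poly_factorized[OF C] by blast
  have real: "\<forall>c\<in>set cs. Im c = 0"
  proof
    fix c assume c: "c \<in> set cs"
    have "poly (char_poly ?C) c = 0" unfolding cs(1) by (rule linear_poly_root[OF c])
    then have "eigenvalue ?C c" using eigenvalue_root_char_poly[OF C] by simp
    then obtain v where "eigenvector ?C v c" unfolding eigenvalue_def by blast
    then show "Im c = 0" by (rule real_eigenvalue_of_sym_mat[OF A S])
  qed
  define ls where "ls = map Re cs"
  have cs_ls: "cs = map complex_of_real ls"
    unfolding ls_def using real by (induct cs) (auto simp: complex_eq_iff)
  have "map_poly complex_of_real (char_poly A) = char_poly ?C"
    by (rule of_real_hom.char_poly_hom[OF A, symmetric])
  also have "\<dots> = map_poly complex_of_real (\<Prod>l\<leftarrow>ls. [:- l, 1:])"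
    unfolding cs(1) cs_ls map_poly_of_real_prod_linear by (simp add: o_def)
  finally have "char_poly A = (\<Prod>l\<leftarrow>ls. [:- l, 1:])" by (rule map_poly_of_real_inj)
  moreover have "length ls = n" using cs(2) unfolding ls_def by simp
  ultimately show ?thesis by blast
qed

lemma sym_mat_eigs_desc:
  fixes A :: "real mat"
  assumes A: "A \<in> carrier_mat n n" and S: "sym_mat A"
  shows "sorted_wrt (\<ge>) (eigs_desc A)" "length (eigs_desc A) = n"
    "char_poly A = (\<Prod>l\<leftarrow>eigs_desc A. [:- l, 1:])"
proof -
  obtain ls where ls: "length ls = n" "char_poly A = (\<Prod>l\<leftarrow>ls. [:- l, 1:])"
    using sym_mat_char_poly_splits[OF A S] by blast
  let ?ls = "rev (sort ls)"
  have "sorted_wrt (\<ge>) ?ls" by (simp add: sorted_wrt_rev flip: sorted_wrt_iff_nth_less)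
  moreover have "(\<Prod>l\<leftarrow>?ls. [:- l, 1:]) = (\<Prod>l\<leftarrow>ls. [:- l, 1:])"
    by (simp only: prod_mset_prod_list[symmetric] mset_map mset_rev mset_sort)
  ultimately have "\<exists>ls. sorted_wrt (\<ge>) ls \<and> length ls = dim_row A \<and> char_poly A = (\<Prod>l\<leftarrow>ls. [:- l, 1:])"
    using ls A by (intro exI[of _ ?ls]) simp
  from someI_ex[OF this] show "sorted_wrt (\<ge>) (eigs_desc A)" "length (eigs_desc A) = n"
    "char_poly A = (\<Prod>l\<leftarrow>eigs_desc A. [:- l, 1:])"
    unfolding eigs_desc_def using A by auto
qed

lemma psd_char_poly_roots_nonneg:
  fixes A :: "real mat"
  assumes A: "A \<in> carrier_mat n n"
    and psd: "\<And>v. v \<in> carrier_vec n \<Longrightarrow> v \<bullet> (A *\<^sub>v v) \<ge> 0"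
    and ls: "char_poly A = (\<Prod>l\<leftarrow>ls. [:- l, 1:])" and l: "l \<in> set ls"
  shows "l \<ge> 0"
proof -
  have "poly (char_poly A) l = 0" unfolding ls by (rule linear_poly_root[OF l])
  then obtain v where "eigenvector A v l"
    using eigenvalue_root_char_poly[OF A] unfolding eigenvalue_def by blast
  with A have v: "v \<in> carrier_vec n" and v0: "v \<noteq> 0\<^sub>v n" and Av: "A *\<^sub>v v = l \<cdot>\<^sub>v v"
    unfolding eigenvector_def by auto
  obtain i where i: "i < n" "v $ i \<noteq> 0"
    using v v0 by (metis eq_vecI carrier_vecD index_zero_vec(1,2))
  have "0 < v $ i * v $ i" using i(2) by (metis not_real_square_gt_zero)
  then have "v \<bullet> v > 0"
    unfolding scalar_prod_def using v i by (auto intro!: sum_pos2[of _ i])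
  moreover have "v \<bullet> (A *\<^sub>v v) = l * (v \<bullet> v)"
    unfolding Av using v by (simp add: scalar_prod_smult_right)
  ultimately show ?thesis using psd[OF v] by (simp add: zero_le_mult_iff)
qed

lemma mat_trace_square_pos:
  fixes A :: "real mat"
  assumes A: "A \<in> carrier_mat n n" and S: "sym_mat A" and A0: "A \<noteq> 0\<^sub>m n n"
  shows "mat_trace (A * A) > 0"
proof -
  have sym: "A $$ (j, i) = A $$ (i, j)" if "i < n" "j < n" for i j
    using arg_cong[OF S[unfolded sym_mat_def], of "\<lambda>M. M $$ (i, j)"] that A by auto
  obtain i j where ij: "i < n" "j < n" "A $$ (i, j) \<noteq> 0"
    using A0 A by (metis eq_matI carrier_matD index_zero_mat(1,2,3))
  have "mat_trace (A * A) = (\<Sum>i<n. \<Sum>j<n. (A $$ (i, j))\<^sup>2)"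
    unfolding mat_trace_mult_eq_sum[OF A A] by (intro sum.cong refl) (simp add: sym power2_eq_square)
  also have "\<dots> > 0"
    using ij by (intro sum_pos2[of _ i] sum_pos2[of _ j]) (auto intro: sum_nonneg)
  finally show ?thesis .
qed

section \<open>Kronecker products\<close>

lemma kron_carrier_mat:
  "A \<in> carrier_mat a b \<Longrightarrow> B \<in> carrier_mat d e \<Longrightarrow> kron A B \<in> carrier_mat (a * d) (b * e)"
  by (simp add: kron_def)

lemma index_kron:
  "A \<in> carrier_mat a b \<Longrightarrow> B \<in> carrier_mat d e \<Longrightarrow> i < a * d \<Longrightarrow> j < b * e \<Longrightarrow>
   kron A B $$ (i, j) = A $$ (i div d, j div e) * B $$ (i mod d, j mod e)"
  by (simp add: kron_def)

lemma div_mod_less_mult: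
  fixes i a d :: nat
  assumes "i < a * d"
  shows "i div d < a" "i mod d < d"
  using assms by (auto simp: less_mult_imp_div_less) (metis mod_less_divisor mult_0_right neq0_conv not_less0)

lemma transpose_kron:
  assumes A: "A \<in> carrier_mat a b" and B: "B \<in> carrier_mat d e"
  shows "transpose_mat (kron A B) = kron (transpose_mat A) (transpose_mat B)"
  using A B div_mod_less_mult by (intro eq_matI) (auto simp: kron_def)

lemma sum_lessThan_mult:
  fixes f :: "nat \<Rightarrow> 'b::comm_monoid_add"
  shows "(\<Sum>r<b * e. f r) = (\<Sum>p<b. \<Sum>q<e. f (p * e + q))"
  using sum.nat_group[of "\<lambda>r. f r" e b, symmetric]
  by (simp add: sum.shift_bounds_nat_ivl[of f 0 _ e, simplified] add.commute lessThan_atLeast0)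

lemma kron_mult:
  assumes A: "A \<in> carrier_mat a b" and A': "A' \<in> carrier_mat b c"
    and B: "B \<in> carrier_mat d e" and B': "B' \<in> carrier_mat e f"
  shows "kron A B * kron A' B' = kron (A * A') (B * B')"
proof (rule eq_matI)
  fix i j assume i: "i < dim_row (kron (A * A') (B * B'))" and j: "j < dim_col (kron (A * A') (B * B'))"
  have i': "i < a * d" and j': "j < c * f" using i j A A' B B' by (auto simp: kron_def)
  have pq: "(p * e + q) div e = p" "(p * e + q) mod e = q" "p * e + q < b * e" if "p < b" "q < e" for p q
  proof -
    show "(p * e + q) div e = p" "(p * e + q) mod e = q" using that by auto
    have "p * e + q < Suc p * e" using that by simp
    also have "\<dots> \<le> b * e" using that by (intro mult_right_mono) auto
    finally show "p * e + q < b * e" .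
  qed
  have "(kron A B * kron A' B') $$ (i, j) = (\<Sum>r<b * e. kron A B $$ (i, r) * kron A' B' $$ (r, j))"
    using i' j' A A' B B' by (simp add: kron_def scalar_prod_def lessThan_atLeast0)
  also have "\<dots> = (\<Sum>p<b. \<Sum>q<e. (A $$ (i div d, p) * A' $$ (p, j div f))
      * (B $$ (i mod d, q) * B' $$ (q, j mod f)))"
    unfolding sum_lessThan_mult using pq i' j' A A' B B' by (intro sum.cong refl) (simp add: index_kron)
  also have "\<dots> = (\<Sum>p<b. A $$ (i div d, p) * A' $$ (p, j div f)) * (\<Sum>q<e. B $$ (i mod d, q) * B' $$ (q, j mod f))"
    by (simp add: sum_product)
  also have "\<dots> = (A * A') $$ (i div d, j div f) * (B * B') $$ (i mod d, j mod f)"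
    using A A' B B' div_mod_less_mult[OF i'] div_mod_less_mult[OF j']
    by (simp add: scalar_prod_def lessThan_atLeast0)
  also have "\<dots> = kron (A * A') (B * B') $$ (i, j)"
    by (rule index_kron[symmetric]) (use A A' B B' i' j' in auto)
  finally show "(kron A B * kron A' B') $$ (i, j) = kron (A * A') (B * B') $$ (i, j)" .
qed (use A A' B B' in \<open>auto simp: kron_def\<close>)

lemma sym_idempotent_kron:
  assumes "sym_idempotent a A" "sym_idempotent d B"
  shows "sym_idempotent (a * d) (kron A B)"
  using assms kron_mult[of A a a A a B d d B d] transpose_kron[of A a a B d d]
  unfolding sym_idempotent_def sym_mat_def by (auto intro: kron_carrier_mat)

section \<open>Positive definite matrices and their projections\<close>

lemma pos_def_mat_psd: "pos_def_mat n M \<Longrightarrow> x \<in> carrier_vec n \<Longrightarrow> x \<bullet> (M *\<^sub>v x) \<ge> 0"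
  unfolding pos_def_mat_def by (cases "x = 0\<^sub>v n") (auto intro: less_imp_le)

lemma pos_def_mat_smult:
  assumes S: "pos_def_mat n S" and c: "c > 0"
  shows "pos_def_mat n (c \<cdot>\<^sub>m S)"
proof -
  from S have Sc: "S \<in> carrier_mat n n" and sS: "transpose_mat S = S"
    unfolding pos_def_mat_def sym_mat_def by auto
  have "(c \<cdot>\<^sub>m S) *\<^sub>v v = c \<cdot>\<^sub>v (S *\<^sub>v v)" if "v \<in> carrier_vec n" for v
    using that Sc by (intro eq_vecI) (auto simp: scalar_prod_smult_left)
  moreover have "transpose_mat (c \<cdot>\<^sub>m S) = c \<cdot>\<^sub>m transpose_mat S" using Sc by (intro eq_matI) auto
  ultimately show ?thesis
    using S c unfolding pos_def_mat_def sym_mat_def by (auto simp: sS scalar_prod_smult_right)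
qed

lemma pos_def_mat_diag_block_mat:
  "(\<forall>B\<in>set Bs. pos_def_mat d B) \<Longrightarrow> pos_def_mat (length Bs * d) (diag_block_mat Bs)"
proof (induct Bs)
  case Nil
  show ?case unfolding pos_def_mat_def sym_mat_def by auto
next
  case (Cons B Bs)
  let ?k = "length Bs * d" and ?M = "diag_block_mat Bs"
  from Cons have pB: "pos_def_mat d B" and pM: "pos_def_mat ?k ?M" by auto
  then have B: "B \<in> carrier_mat d d" "transpose_mat B = B"
    and M: "?M \<in> carrier_mat ?k ?k" "transpose_mat ?M = ?M"
    unfolding pos_def_mat_def sym_mat_def by auto
  have eq: "diag_block_mat (B # Bs) = four_block_mat B (0\<^sub>m d ?k) (0\<^sub>m ?k d) ?M"
    using B M by (simp add: Let_def)
  have pos: "v \<bullet> (diag_block_mat (B # Bs) *\<^sub>v v) > 0"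
    if v: "v \<in> carrier_vec (d + ?k)" and v0: "v \<noteq> 0\<^sub>v (d + ?k)" for v
  proof -
    define u w where "u = vec_first v d" and "w = vec_last v ?k"
    have u: "u \<in> carrier_vec d" and w: "w \<in> carrier_vec ?k" unfolding u_def w_def by auto
    have vuw: "v = u @\<^sub>v w" unfolding u_def w_def using v by simp
    have "diag_block_mat (B # Bs) *\<^sub>v v = (B *\<^sub>v u) @\<^sub>v (?M *\<^sub>v w)"
      unfolding eq vuw by (rule mult_mat_vec_split[OF B(1) M(1) u w])
    then have qf: "v \<bullet> (diag_block_mat (B # Bs) *\<^sub>v v) = u \<bullet> (B *\<^sub>v u) + w \<bullet> (?M *\<^sub>v w)"
      unfolding vuw using u w B M by (simp add: scalar_prod_append[of _ d _ ?k])
    have "u \<noteq> 0\<^sub>v d \<or> w \<noteq> 0\<^sub>v ?k" using v0 vuw by auto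
    then show ?thesis
      using qf pos_def_mat_psd[OF pB u] pos_def_mat_psd[OF pM w] pB pM u w
      unfolding pos_def_mat_def by fastforce
  qed
  have "transpose_mat (diag_block_mat (B # Bs)) = diag_block_mat (B # Bs)"
    unfolding eq using B M by (subst transpose_four_block_mat) auto
  moreover have "diag_block_mat (B # Bs) \<in> carrier_mat (d + ?k) (d + ?k)"
    unfolding eq using B M by (intro four_block_carrier_mat)
  ultimately show ?case unfolding pos_def_mat_def sym_mat_def using pos by auto
qed

lemma pos_def_mat_V_mat:
  assumes Sig: "\<And>i. i < a \<Longrightarrow> pos_def_mat d (Sig i)" and n: "\<And>i. i < a \<Longrightarrow> n i \<ge> 1"
  shows "pos_def_mat (a * d) (V_mat a n Sig)"
proof -
  have "pos_def_mat d ((real (\<Sum>j<a. n j) / real (n i)) \<cdot>\<^sub>m Sig i)" if i: "i < a" for i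
  proof (rule pos_def_mat_smult[OF Sig[OF i]])
    have "n i \<le> (\<Sum>j<a. n j)" using i by (intro member_le_sum) auto
    then have "real (n i) \<le> real (\<Sum>j<a. n j)" by (rule of_nat_mono)
    moreover have "real (n i) > 0" using n[OF i] by simp
    ultimately show "real (\<Sum>j<a. n j) / real (n i) > 0" by (intro divide_pos_pos) linarith+
  qed
  then show ?thesis
    using pos_def_mat_diag_block_mat[of "map (\<lambda>i. (real (\<Sum>j<a. n j) / real (n i)) \<cdot>\<^sub>m Sig i) [0..<a]" d]
    unfolding V_mat_def by auto
qed

lemma scalar_prod_sandwich:
  fixes P V :: "real mat"
  assumes P: "P \<in> carrier_mat n n" and S: "sym_mat P" and V: "V \<in> carrier_mat n n"
    and w: "w \<in> carrier_vec n"
  shows "w \<bullet> ((P * V * P) *\<^sub>v w) = (P *\<^sub>v w) \<bullet> (V *\<^sub>v (P *\<^sub>v w))"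
proof -
  have "(P * V * P) *\<^sub>v w = P *\<^sub>v (V *\<^sub>v (P *\<^sub>v w))"
    using P V w by (simp add: assoc_mult_mat_vec[of _ n n _ n])
  moreover have "w \<bullet> (P *\<^sub>v z) = (P *\<^sub>v w) \<bullet> z" if "z \<in> carrier_vec n" for z
    using transpose_vec_mult_scalar[OF P that w] S unfolding sym_mat_def by simp
  ultimately show ?thesis using P V w by simp
qed

lemma sandwich_nonzero:
  fixes P V :: "real mat"
  assumes P: "P \<in> carrier_mat n n" and S: "sym_mat P" and V: "pos_def_mat n V"
    and P0: "P \<noteq> 0\<^sub>m n n"
  shows "P * V * P \<noteq> 0\<^sub>m n n"
proof
  assume PVP: "P * V * P = 0\<^sub>m n n"
  have Vc: "V \<in> carrier_mat n n" using V unfolding pos_def_mat_def by auto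
  \<comment> \<open>Every column of \<open>P\<close> is isotropic for \<open>V\<close>, hence zero.\<close>
  have col: "P *\<^sub>v unit_vec n j = 0\<^sub>v n" if j: "j < n" for j
  proof (rule ccontr)
    assume "P *\<^sub>v unit_vec n j \<noteq> 0\<^sub>v n"
    then have "(P *\<^sub>v unit_vec n j) \<bullet> (V *\<^sub>v (P *\<^sub>v unit_vec n j)) > 0"
      using V P unfolding pos_def_mat_def by auto
    moreover have "(0\<^sub>m n n :: real mat) *\<^sub>v unit_vec n j = 0\<^sub>v n" by (intro eq_vecI) auto
    ultimately show False
      using scalar_prod_sandwich[OF P S Vc, of "unit_vec n j"] PVP by simp
  qed
  have "P = 0\<^sub>m n n"
  proof (rule eq_matI)
    fix i j assume "i < dim_row (0\<^sub>m n n :: real mat)" "j < dim_col (0\<^sub>m n n :: real mat)"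
    then show "P $$ (i, j) = 0\<^sub>m n n $$ (i, j)"
      using arg_cong[OF col[of j], of "\<lambda>w. w $ i"] P by (simp add: scalar_prod_right_unit)
  qed (use P in auto)
  with P0 show False ..
qed

lemma idempotent_mult_pow_mat:
  assumes P: "P \<in> carrier_mat n n" and PP: "P * P = P" and V: "V \<in> carrier_mat n n"
  shows "P * (P * V) ^\<^sub>m Suc k = (P * V) ^\<^sub>m Suc k"
proof (induction k)
  case 0
  show ?case using P V by (simp add: PP flip: assoc_mult_mat[of P n n P n V n])
next
  case (Suc k)
  have "P * ((P * V) ^\<^sub>m Suc k * (P * V)) = (P * (P * V) ^\<^sub>m Suc k) * (P * V)"
    by (rule assoc_mult_mat[symmetric]) (use P V in auto)
  then show ?case using Suc by (simp only: pow_mat.simps(2)[of _ "Suc k"])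
qed

lemma sandwich_pow_mat:
  assumes P: "P \<in> carrier_mat n n" and PP: "P * P = P" and V: "V \<in> carrier_mat n n"
  shows "(P * V * P) ^\<^sub>m Suc k = (P * V) ^\<^sub>m Suc k * P"
proof (induction k)
  case 0
  show ?case using P V by simp
next
  case (Suc k)
  have "(P * V) ^\<^sub>m Suc k * P * (P * V * P) = (P * V) ^\<^sub>m Suc k * ((P * P) * V * P)"
    using P V by (simp add: assoc_mult_mat[of _ n n _ n _ n])
  also have "\<dots> = (P * V) ^\<^sub>m Suc (Suc k) * P"
    using P V by (simp add: PP assoc_mult_mat[of _ n n _ n _ n])
  finally show ?case using Suc by simp
qed

lemma mat_trace_sandwich_pow:
  fixes P V :: "real mat"
  assumes P: "P \<in> carrier_mat n n" and PP: "P * P = P" and V: "V \<in> carrier_mat n n"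
  shows "mat_trace ((P * V * P) ^\<^sub>m Suc k) = mat_trace ((P * V) ^\<^sub>m Suc k)"
proof -
  have "mat_trace ((P * V * P) ^\<^sub>m Suc k) = mat_trace ((P * V) ^\<^sub>m Suc k * P)"
    by (simp only: sandwich_pow_mat[OF P PP V])
  also have "\<dots> = mat_trace (P * (P * V) ^\<^sub>m Suc k)"
    by (rule mat_trace_mult_comm) (use P V in auto)
  also have "\<dots> = mat_trace ((P * V) ^\<^sub>m Suc k)"
    by (simp only: idempotent_mult_pow_mat[OF P PP V])
  finally show ?thesis .
qed

section \<open>Spectral bounds on the degrees of freedom\<close>

lemma sorted_nonneg_power_sum_bounds:
  fixes ls :: "real list"
  assumes sorted: "sorted_wrt (\<ge>) ls" and nonneg: "\<forall>l\<in>set ls. l \<ge> 0"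
    and pos: "(\<Sum>l\<leftarrow>ls. l\<^sup>2) > 0"
  shows "hd ls > 0" "(hd ls)\<^sup>2 \<le> (\<Sum>l\<leftarrow>ls. l\<^sup>2)" "(\<Sum>l\<leftarrow>ls. l ^ 3) \<le> hd ls * (\<Sum>l\<leftarrow>ls. l\<^sup>2)"
    "hd ls ^ 3 \<le> (\<Sum>l\<leftarrow>ls. l ^ 3)"
proof -
  obtain m rest where ls: "ls = m # rest" using pos by (cases ls) auto
  have le: "l \<le> m" "0 \<le> l" if "l \<in> set ls" for l using sorted nonneg that ls by auto
  have "(\<Sum>l\<leftarrow>ls. l ^ 3) \<le> (\<Sum>l\<leftarrow>ls. m * l\<^sup>2)"
  proof (rule sum_list_mono)
    fix l assume "l \<in> set ls"
    then have "l * l\<^sup>2 \<le> m * l\<^sup>2" using le by (intro mult_right_mono) auto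
    then show "l ^ 3 \<le> m * l\<^sup>2" by (simp add: power3_eq_cube power2_eq_square)
  qed
  then show "(\<Sum>l\<leftarrow>ls. l ^ 3) \<le> hd ls * (\<Sum>l\<leftarrow>ls. l\<^sup>2)"
    by (simp add: ls sum_list_const_mult distrib_left)
  have "(\<Sum>l\<leftarrow>ls. l\<^sup>2) \<le> (\<Sum>l\<leftarrow>ls. m * l)"
    using le by (intro sum_list_mono) (simp add: power2_eq_square mult_right_mono)
  then have "0 < m * (\<Sum>l\<leftarrow>ls. l)" using pos by (simp add: sum_list_const_mult)
  then show "hd ls > 0" using le[of m] ls by (auto simp: zero_less_mult_iff)
  have "0 \<le> (\<Sum>l\<leftarrow>rest. l\<^sup>2)" "0 \<le> (\<Sum>l\<leftarrow>rest. l ^ 3)" using le ls by (auto intro!: sum_list_nonneg)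
  then show "(hd ls)\<^sup>2 \<le> (\<Sum>l\<leftarrow>ls. l\<^sup>2)" "hd ls ^ 3 \<le> (\<Sum>l\<leftarrow>ls. l ^ 3)" by (simp_all add: ls)
qed

lemma power_sum_ratio_bounds:
  fixes m S2 S3 :: real
  assumes m: "0 < m" and m2: "m\<^sup>2 \<le> S2" and S3: "S3 \<le> m * S2" and m3: "m ^ 3 \<le> S3"
  shows "0 < m / sqrt S2" "m / sqrt S2 \<le> 1"
    "1 / (m / sqrt S2)\<^sup>2 \<le> S2 ^ 3 / S3\<^sup>2" "S2 ^ 3 / S3\<^sup>2 \<le> 1 / (m / sqrt S2) ^ 6"
proof -
  have S2: "S2 > 0" using m m2 by (smt (verit) zero_less_power)
  have S3p: "S3 > 0" using m m3 by (smt (verit) zero_less_power)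
  show "0 < m / sqrt S2" using m S2 by simp
  show "m / sqrt S2 \<le> 1" using m m2 S2 by (simp add: real_le_rsqrt)
  have inv2: "1 / (m / sqrt S2)\<^sup>2 = S2 / m\<^sup>2" using S2 by (simp add: power_divide)
  have "sqrt S2 ^ 6 = (sqrt S2 ^ 2) ^ 3" by (simp flip: power_mult)
  then have inv6: "1 / (m / sqrt S2) ^ 6 = S2 ^ 3 / m ^ 6" using S2 by (simp add: power_divide)
  have "S3\<^sup>2 \<le> (m * S2)\<^sup>2" using S3 S3p by (intro power_mono) auto
  then have "S2 * S3\<^sup>2 \<le> S2 ^ 3 * m\<^sup>2"
    using S2 by (simp add: power_mult_distrib power3_eq_cube power2_eq_square mult_ac mult_left_mono)
  then show "1 / (m / sqrt S2)\<^sup>2 \<le> S2 ^ 3 / S3\<^sup>2" unfolding inv2 using m S3p by (simp add: divide_simps)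
  have "(m ^ 3)\<^sup>2 \<le> S3\<^sup>2" using m3 m by (intro power_mono) auto
  then show "S2 ^ 3 / S3\<^sup>2 \<le> 1 / (m / sqrt S2) ^ 6"
    unfolding inv6 using m S2 S3p by (intro divide_left_mono) (auto simp flip: power_mult)
qed

lemma beta1_f_P_bounds:
  fixes P V :: "real mat"
  assumes P: "sym_idempotent n P" and P0: "P \<noteq> 0\<^sub>m n n" and V: "pos_def_mat n V"
  shows "0 < beta1 (P * V * P)" "beta1 (P * V * P) \<le> 1"
    "1 / (beta1 (P * V * P))\<^sup>2 \<le> f_P P V" "f_P P V \<le> 1 / (beta1 (P * V * P)) ^ 6"
proof -
  from P have Pc: "P \<in> carrier_mat n n" and sP: "sym_mat P" and PP: "P * P = P"
    unfolding sym_idempotent_def by auto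
  from V have Vc: "V \<in> carrier_mat n n" and sV: "sym_mat V" unfolding pos_def_mat_def by auto
  define A where "A = P * V * P"
  have Ac: "A \<in> carrier_mat n n" unfolding A_def using Pc Vc by auto
  have sA: "sym_mat A"
    using sP sV Pc Vc unfolding A_def sym_mat_def
    by (simp add: transpose_mult[of _ n n _ n] assoc_mult_mat[of _ n n _ n _ n])
  have psd: "v \<bullet> (A *\<^sub>v v) \<ge> 0" if v: "v \<in> carrier_vec n" for v
    unfolding A_def scalar_prod_sandwich[OF Pc sP Vc v] using Pc v by (intro pos_def_mat_psd[OF V]) auto
  define ls where "ls = eigs_desc A"
  note eigs = sym_mat_eigs_desc[OF Ac sA, folded ls_def]
  have nonneg: "\<forall>l\<in>set ls. l \<ge> 0" using psd_char_poly_roots_nonneg[OF Ac psd eigs(3)] by blast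
  have PVc: "P * V \<in> carrier_mat n n" using Pc Vc by simp
  have pow2: "X * X = X ^\<^sub>m 2" and pow3: "X * X * X = X ^\<^sub>m 3" if "X \<in> carrier_mat n n" for X :: "real mat"
    using that by (simp_all add: numeral_2_eq_2 numeral_3_eq_3)
  have tr_A: "mat_trace (A ^\<^sub>m k) = (\<Sum>l\<leftarrow>ls. l ^ k)" for k
    by (rule mat_trace_pow_eq_sum_eigenvalues[OF Ac eigs(3)])
  have tr: "mat_trace ((P * V) ^\<^sub>m k) = (\<Sum>l\<leftarrow>ls. l ^ k)" if "k > 0" for k
    using that tr_A[of k] mat_trace_sandwich_pow[OF Pc PP Vc, of "k - 1"] unfolding A_def by simp
  have "f_P P V = (\<Sum>l\<leftarrow>ls. l\<^sup>2) ^ 3 / (\<Sum>l\<leftarrow>ls. l ^ 3)\<^sup>2"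
    unfolding f_P_def pow3[OF PVc] unfolding pow2[OF PVc] tr[OF zero_less_numeral] ..
  moreover have "beta1 A = hd ls / sqrt (\<Sum>l\<leftarrow>ls. l\<^sup>2)" unfolding beta1_def ls_def ..
  moreover have "0 < mat_trace (A * A)"
    using mat_trace_square_pos[OF Ac sA] sandwich_nonzero[OF Pc sP V P0] unfolding A_def by blast
  then have "(\<Sum>l\<leftarrow>ls. l\<^sup>2) > 0" unfolding pow2[OF Ac] tr_A .
  ultimately show "0 < beta1 (P * V * P)" "beta1 (P * V * P) \<le> 1"
    "1 / (beta1 (P * V * P))\<^sup>2 \<le> f_P P V" "f_P P V \<le> 1 / (beta1 (P * V * P)) ^ 6"
    using power_sum_ratio_bounds[OF sorted_nonneg_power_sum_bounds[OF eigs(1) nonneg]]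
    unfolding A_def by auto
qed

lemma filterlim_at_top_if_inverse_square_le:
  fixes \<beta> f :: "nat \<Rightarrow> real"
  assumes "\<beta> \<longlonglongrightarrow> 0" "\<And>k. 0 < \<beta> k" "\<And>k. 1 / (\<beta> k)\<^sup>2 \<le> f k"
  shows "filterlim f at_top sequentially"
proof (rule filterlim_at_top_mono)
  show "filterlim (\<lambda>k. 1 / (\<beta> k)\<^sup>2) at_top sequentially"
  proof (rule LIM_at_top_divide)
    show "(\<lambda>k. (\<beta> k)\<^sup>2) \<longlonglongrightarrow> 0" using tendsto_power[OF assms(1), of 2] by simp
    show "\<forall>\<^sub>F k in sequentially. 0 < (\<beta> k)\<^sup>2" by (intro always_eventually allI zero_less_power assms(2))
  qed auto
qed (use assms(3) in auto)

lemma tendsto_one_if_between_inverse_powers: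
  fixes \<beta> f :: "nat \<Rightarrow> real"
  assumes "\<beta> \<longlonglongrightarrow> 1" "\<And>k. 1 / (\<beta> k)\<^sup>2 \<le> f k" "\<And>k. f k \<le> 1 / (\<beta> k) ^ 6"
  shows "f \<longlonglongrightarrow> 1"
  by (rule tendsto_sandwich[of "\<lambda>k. 1 / (\<beta> k)\<^sup>2" _ _ "\<lambda>k. 1 / (\<beta> k) ^ 6"])
    (use assms in \<open>auto intro!: tendsto_eq_intros\<close>)

section \<open>The chi-square family\<close>

lemma borel_measurable_chi_sq_density [measurable]: "chi_sq_density f \<in> borel_measurable borel"
  unfolding chi_sq_density_def by measurable

lemma chi_sq_density_nonneg: "f > 0 \<Longrightarrow> chi_sq_density f x \<ge> 0"
  unfolding chi_sq_density_def by auto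

lemma chi_sq_density_double:
  assumes f: "f > 0"
  shows "chi_sq_density f (2 * x) = indicator {0..} x * x powr (f / 2 - 1) / exp x / (2 * Gamma (f / 2))"
proof (cases "x > 0")
  case True
  define a where "a = f / 2 - 1"
  have fa: "f / 2 = a + 1" unfolding a_def by simp
  have G: "Gamma (a + 1) > 0" using f fa by (metis Gamma_real_pos half_gt_zero)
  have "chi_sq_density f (2 * x) = (2 * x) powr a * exp (- (2 * x) / 2) / (2 powr (a + 1) * Gamma (a + 1))"
    unfolding chi_sq_density_def using True by (simp add: a_def fa[symmetric])
  also have "\<dots> = x powr a / exp x / (2 * Gamma (a + 1))"
    using G True by (simp add: powr_mult powr_add exp_minus field_simps)
  finally show ?thesis using True by (simp add: a_def fa[symmetric])
next
  case False
  then show ?thesis by (cases "x = 0") (auto simp: chi_sq_density_def)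
qed

lemma nn_integral_chi_sq_density:
  assumes f: "f > 0"
  shows "(\<integral>\<^sup>+x. ennreal (chi_sq_density f x) \<partial>lborel) = 1"
proof -
  have G: "Gamma (f / 2) > 0" using f by simp
  have "(\<integral>\<^sup>+x. ennreal (chi_sq_density f x) \<partial>lborel)
      = 2 * (\<integral>\<^sup>+x. ennreal (chi_sq_density f (2 * x)) \<partial>lborel)"
    using nn_integral_real_affine[of "\<lambda>x. ennreal (chi_sq_density f x)" 2 0] by simp
  also have "(\<integral>\<^sup>+x. ennreal (chi_sq_density f (2 * x)) \<partial>lborel)
      = (\<integral>\<^sup>+x. ennreal (1 / (2 * Gamma (f / 2))) * ennreal (indicator {0..} x * x powr (f / 2 - 1) / exp x) \<partial>lborel)"
    unfolding chi_sq_density_double[OF f] using G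
    by (intro nn_integral_cong) (simp add: ennreal_mult'[symmetric] divide_simps)
  also have "\<dots> = ennreal (1 / (2 * Gamma (f / 2)))
      * (\<integral>\<^sup>+x. ennreal (indicator {0..} x * x powr (f / 2 - 1) / exp x) \<partial>lborel)"
    by (rule nn_integral_cmult) measurable
  also have "(\<integral>\<^sup>+x. ennreal (indicator {0..} x * x powr (f / 2 - 1) / exp x) \<partial>lborel) = ennreal (Gamma (f / 2))"
    using Gamma_conv_nn_integral_real[of "f / 2"] f by simp
  also have "ennreal (1 / (2 * Gamma (f / 2))) * ennreal (Gamma (f / 2)) = ennreal (1 / 2)"
    using G by (simp flip: ennreal_mult)
  also have "(2::ennreal) * ennreal (1 / 2) = ennreal (2 * (1 / 2))"
    by (subst ennreal_mult) auto
  also have "\<dots> = 1" by simp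
  finally show ?thesis .
qed

lemma integrable_chi_sq_density: "f > 0 \<Longrightarrow> integrable lborel (chi_sq_density f)"
  by (intro integrableI_nonneg) (auto simp: chi_sq_density_nonneg nn_integral_chi_sq_density)

lemma integral_chi_sq_density: "f > 0 \<Longrightarrow> (\<integral>x. chi_sq_density f x \<partial>lborel) = 1"
  using nn_integral_eq_integral[OF integrable_chi_sq_density, of f] nn_integral_chi_sq_density[of f]
    chi_sq_density_nonneg[of f] by simp

lemma cdf_density_lborel:
  fixes g :: "real \<Rightarrow> real"
  assumes g: "integrable lborel g" and nonneg: "\<And>t. 0 \<le> g t"
  shows "cdf (density lborel (\<lambda>t. ennreal (g t))) x = (\<integral>t. indicator {..x} t * g t \<partial>lborel)"
proof -
  have [measurable]: "g \<in> borel_measurable borel" using g by auto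
  have "cdf (density lborel (\<lambda>t. ennreal (g t))) x
      = enn2real (\<integral>\<^sup>+t. ennreal (indicator {..x} t * g t) \<partial>lborel)"
    unfolding cdf_def measure_def
    by (subst emeasure_density) (auto intro!: arg_cong[where f=enn2real] nn_integral_cong simp: indicator_def)
  also have "(\<integral>\<^sup>+t. ennreal (indicator {..x} t * g t) \<partial>lborel)
      = ennreal (\<integral>t. indicator {..x} t * g t \<partial>lborel)"
    using integrable_mult_indicator[OF _ g, of "{..x}"] nonneg
    by (intro nn_integral_eq_integral) auto
  finally show ?thesis using nonneg by (simp add: integral_nonneg)
qed

lemma cdf_K_law:
  assumes f: "f > 0"
  shows "cdf (K_law f) x = (\<integral>t. indicator {..f + x * sqrt (2 * f)} t * chi_sq_density f t \<partial>lborel)"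
proof -
  have "(\<lambda>t. (t - f) / sqrt (2 * f)) -` {..x} = {..f + x * sqrt (2 * f)}"
    using f by (auto simp: pos_divide_le_eq algebra_simps)
  then have "cdf (K_law f) x = cdf (chi_sq_law f) (f + x * sqrt (2 * f))"
    unfolding cdf_def K_law_def by (subst measure_distr) (auto simp: chi_sq_law_def)
  then show ?thesis
    unfolding chi_sq_law_def
    using cdf_density_lborel[OF integrable_chi_sq_density[OF f] chi_sq_density_nonneg[OF f]] by simp
qed

section \<open>Continuity of the law of K_f in f\<close>

lemma Gamma_lower_bound:
  assumes a: "0 < a"
  shows "\<exists>\<gamma>>0. \<forall>s\<in>{a..b}. \<gamma> \<le> Gamma (s::real)"
proof (cases "a \<le> b")
  case True
  have cont: "continuous_on {a..b} Gamma"
    using a by (intro continuous_on_Gamma) (auto dest: nonpos_Ints_nonpos)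
  obtain s0 where "s0 \<in> {a..b}" "\<forall>s\<in>{a..b}. Gamma s0 \<le> Gamma s"
    using continuous_attains_inf[OF compact_Icc _ cont] True by auto
  moreover have "Gamma s0 > 0" using \<open>s0 \<in> {a..b}\<close> a by simp
  ultimately show ?thesis by blast
qed (auto intro: exI[of _ 1])

lemma tendsto_chi_sq_density:
  assumes F: "F \<longlonglongrightarrow> f" and f: "f > 0"
  shows "(\<lambda>k. chi_sq_density (F k) t) \<longlonglongrightarrow> chi_sq_density f t"
proof (cases "t > 0")
  case True
  have "Gamma (f / 2) \<noteq> 0" using f by (metis Gamma_real_pos half_gt_zero less_irrefl)
  then have "(\<lambda>k. t powr (F k / 2 - 1) * exp (- t / 2) / (2 powr (F k / 2) * Gamma (F k / 2)))
      \<longlonglongrightarrow> t powr (f / 2 - 1) * exp (- t / 2) / (2 powr (f / 2) * Gamma (f / 2))"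
    using True f by (intro tendsto_intros F) (auto dest: nonpos_Ints_nonpos)
  then show ?thesis unfolding chi_sq_density_def using True by simp
qed (simp add: chi_sq_density_def)

text \<open>Up to the factor \<open>1/\<gamma>\<close>, the envelope is
  \<open>(t powr (f/4 - 1) + t powr (3f/4 - 1)) * exp (- t/2)\<close>, which dominates every chi-square density
  with between \<open>f/2\<close> and \<open>3f/2\<close> degrees of freedom once \<open>\<gamma>\<close> bounds \<open>Gamma\<close> from below.\<close>

definition chi_sq_envelope :: "real \<Rightarrow> real \<Rightarrow> real \<Rightarrow> real" where
  "chi_sq_envelope f \<gamma> t = (2 powr (f / 4) * Gamma (f / 4) * chi_sq_density (f / 2) t
      + 2 powr (3 * f / 4) * Gamma (3 * f / 4) * chi_sq_density (3 * f / 2) t) / \<gamma>"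

lemma integrable_chi_sq_envelope: "f > 0 \<Longrightarrow> integrable lborel (chi_sq_envelope f \<gamma>)"
  unfolding chi_sq_envelope_def
  by (intro integrable_divide Bochner_Integration.integrable_add integrable_mult_right
      integrable_chi_sq_density) auto

lemma chi_sq_density_le_envelope:
  assumes f: "f > 0" and \<gamma>: "\<gamma> > 0" "\<forall>s\<in>{f / 4..3 * f / 4}. \<gamma> \<le> Gamma s"
    and g: "f / 2 \<le> g" "g \<le> 3 * f / 2"
  shows "chi_sq_density g t \<le> chi_sq_envelope f \<gamma> t"
proof (cases "t > 0")
  case False
  then show ?thesis unfolding chi_sq_envelope_def chi_sq_density_def by simp
next
  case True
  have "Gamma (f / 4) \<noteq> 0" "Gamma (3 * f / 4) \<noteq> 0"
    using f by (metis Gamma_real_pos divide_pos_pos less_irrefl mult_pos_pos zero_less_numeral)+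
  then have env: "chi_sq_envelope f \<gamma> t = (t powr (f / 4 - 1) + t powr (3 * f / 4 - 1)) * exp (- t / 2) / \<gamma>"
    unfolding chi_sq_envelope_def chi_sq_density_def using True by (simp add: field_simps)
  have "t powr (g / 2 - 1) \<le> t powr (f / 4 - 1) + t powr (3 * f / 4 - 1)"
  proof (cases "t \<le> 1")
    case True
    then have "t powr (g / 2 - 1) \<le> t powr (f / 4 - 1)" using \<open>t > 0\<close> g by (intro powr_mono') auto
    then show ?thesis by (smt (verit) powr_ge_zero)
  next
    case False
    then have "t powr (g / 2 - 1) \<le> t powr (3 * f / 4 - 1)" using g by (intro powr_mono) auto
    then show ?thesis by (smt (verit) powr_ge_zero)
  qed
  moreover have "\<gamma> \<le> 2 powr (g / 2) * Gamma (g / 2)"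
    using mult_mono[OF ge_one_powr_ge_zero[of 2 "g / 2"] \<gamma>(2)[rule_format, of "g / 2"]] \<gamma>(1) f g by auto
  ultimately have "t powr (g / 2 - 1) * exp (- t / 2) / (2 powr (g / 2) * Gamma (g / 2))
      \<le> (t powr (f / 4 - 1) + t powr (3 * f / 4 - 1)) * exp (- t / 2) / \<gamma>"
    using \<gamma>(1) by (intro frac_le mult_right_mono) auto
  then show ?thesis unfolding env chi_sq_density_def using True by simp
qed

lemma tendsto_indicator_atMost:
  fixes c :: "nat \<Rightarrow> real"
  assumes c: "c \<longlonglongrightarrow> c0" and t: "t \<noteq> c0"
  shows "(\<lambda>i. indicator {..c i} t :: real) \<longlonglongrightarrow> indicator {..c0} t"
proof (rule tendsto_eventually)
  consider "t < c0" | "c0 < t" using t by linarith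
  then show "\<forall>\<^sub>F i in sequentially. indicator {..c i} t = (indicator {..c0} t :: real)"
  proof cases
    case 1
    show ?thesis using order_tendstoD(1)[OF c 1] by eventually_elim (use 1 in \<open>auto simp: indicator_def\<close>)
  next
    case 2
    show ?thesis using order_tendstoD(2)[OF c 2] by eventually_elim (use 2 in \<open>auto simp: indicator_def\<close>)
  qed
qed

lemma cdf_K_law_continuous:
  assumes F: "F \<longlonglongrightarrow> f" and f: "f > 0" and F_pos: "\<And>k. F k > 0"
  shows "(\<lambda>k. cdf (K_law (F k)) x) \<longlonglongrightarrow> cdf (K_law f) x"
proof -
  obtain \<gamma> where \<gamma>: "\<gamma> > 0" "\<forall>s\<in>{f / 4..3 * f / 4}. \<gamma> \<le> Gamma s"
    using Gamma_lower_bound[of "f / 4" "3 * f / 4"] f by auto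
  obtain K0 where K0: "\<And>k. k \<ge> K0 \<Longrightarrow> dist (F k) f < f / 2"
    using tendstoD[OF F, of "f / 2"] f unfolding eventually_sequentially by auto
  define G where "G i = F (i + K0)" for i
  have G: "G \<longlonglongrightarrow> f" unfolding G_def using F by (rule LIMSEQ_ignore_initial_segment)
  have G_range: "f / 2 \<le> G i" "G i \<le> 3 * f / 2" for i
    using K0[of "i + K0"] unfolding G_def dist_real_def abs_less_iff by linarith+
  define c where "c i = G i + x * sqrt (2 * G i)" for i
  have c: "c \<longlonglongrightarrow> f + x * sqrt (2 * f)" unfolding c_def by (intro tendsto_intros G)
  have "(\<lambda>i. \<integral>t. indicator {..c i} t * chi_sq_density (G i) t \<partial>lborel)
      \<longlonglongrightarrow> (\<integral>t. indicator {..f + x * sqrt (2 * f)} t * chi_sq_density f t \<partial>lborel)"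
  proof (rule integral_dominated_convergence[where w = "chi_sq_envelope f \<gamma>"])
    show "AE t in lborel. (\<lambda>i. indicator {..c i} t * chi_sq_density (G i) t)
        \<longlonglongrightarrow> indicator {..f + x * sqrt (2 * f)} t * chi_sq_density f t"
      using AE_lborel_singleton[of "f + x * sqrt (2 * f)"]
      by eventually_elim (intro tendsto_mult tendsto_indicator_atMost[OF c] tendsto_chi_sq_density[OF G f])
    show "AE t in lborel. norm (indicator {..c i} t * chi_sq_density (G i) t) \<le> chi_sq_envelope f \<gamma> t" for i
    proof (rule AE_I2)
      fix t
      have "0 \<le> chi_sq_density (G i) t" using G_range(1)[of i] f by (intro chi_sq_density_nonneg) linarith
      moreover have "chi_sq_density (G i) t \<le> chi_sq_envelope f \<gamma> t"
        by (rule chi_sq_density_le_envelope[OF f \<gamma> G_range])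
      ultimately show "norm (indicator {..c i} t * chi_sq_density (G i) t) \<le> chi_sq_envelope f \<gamma> t"
        by (auto simp: indicator_def)
    qed
  qed (auto intro: integrable_chi_sq_envelope[OF f])
  then have "(\<lambda>i. cdf (K_law (F (i + K0))) x) \<longlonglongrightarrow> cdf (K_law f) x"
    using F_pos f by (simp add: cdf_K_law c_def G_def)
  then show ?thesis by (rule LIMSEQ_offset)
qed

lemma weak_conv_m_K_law:
  "F \<longlonglongrightarrow> f \<Longrightarrow> f > 0 \<Longrightarrow> (\<And>k. F k > 0) \<Longrightarrow> weak_conv_m (\<lambda>k. K_law (F k)) (K_law f)"
  unfolding weak_conv_m_def weak_conv_def using cdf_K_law_continuous by blast

section \<open>The normal limit of K_f as f tends to infinity\<close>

lemma ln_le_half_diff_inverse: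
  assumes x: "x \<ge> (1::real)"
  shows "ln x \<le> (x - 1 / x) / 2"
proof -
  have "(\<lambda>z. (z - 1 / z) / 2 - ln z) 1 \<le> (\<lambda>z. (z - 1 / z) / 2 - ln z) x"
  proof (rule DERIV_nonneg_imp_increasing_open[OF x])
    fix z :: real assume z: "1 < z" "z < x"
    have "((\<lambda>z. (z - 1 / z) / 2 - ln z) has_real_derivative (z - 1)\<^sup>2 / (2 * z * z)) (at z)"
      using z by (auto intro!: derivative_eq_intros simp: field_simps power2_eq_square)
    then show "\<exists>y. ((\<lambda>z. (z - 1 / z) / 2 - ln z) has_real_derivative y) (at z) \<and> 0 \<le> y"
      using z by auto
  qed (intro continuous_intros, auto)
  then show ?thesis by simp
qed

lemma ln_le_quadratic:
  assumes x: "0 < x" "x \<le> (1::real)"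
  shows "ln x \<le> (x - 1) - (x - 1)\<^sup>2 / 2"
proof -
  have "(\<lambda>z. ln z - (z - 1) + (z - 1)\<^sup>2 / 2) x \<le> (\<lambda>z. ln z - (z - 1) + (z - 1)\<^sup>2 / 2) 1"
  proof (rule DERIV_nonneg_imp_increasing_open[OF x(2)])
    fix z :: real assume z: "x < z" "z < 1"
    have "((\<lambda>z. ln z - (z - 1) + (z - 1)\<^sup>2 / 2) has_real_derivative (z - 1)\<^sup>2 / z) (at z)"
      using z x by (auto intro!: derivative_eq_intros simp: field_simps power2_eq_square)
    then show "\<exists>y. ((\<lambda>z. ln z - (z - 1) + (z - 1)\<^sup>2 / 2) has_real_derivative y) (at z) \<and> 0 \<le> y"
      using z x by auto
  qed (use x in \<open>intro continuous_intros, auto\<close>)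
  then show ?thesis by simp
qed

text \<open>With \<open>m = s\<^sup>2\<close> and \<open>y = s u\<close>, the left-hand sides below are the logarithm of
  \<open>chi_sq_profile m y\<close>.\<close>

lemma log_profile_bound_nonneg:
  assumes s: "s \<ge> (1::real)" and u: "u \<ge> 0"
  shows "(s\<^sup>2 - 1) * ln (1 + u) - s\<^sup>2 * u \<le> 2 - \<bar>s * u\<bar> / 4"
proof -
  have "0 \<le> ln (1 + u)" using u by simp
  then have "(s\<^sup>2 - 1) * ln (1 + u) \<le> s\<^sup>2 * ln (1 + u)" by (simp add: algebra_simps)
  also have "\<dots> \<le> s\<^sup>2 * (((1 + u) - 1 / (1 + u)) / 2)"
    using ln_le_half_diff_inverse[of "1 + u"] u by (intro mult_left_mono) auto
  also have "\<dots> - s\<^sup>2 * u = - ((s * u)\<^sup>2 / (2 * (1 + u)))"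
    using u by (simp add: field_simps power2_eq_square)
  finally have E: "(s\<^sup>2 - 1) * ln (1 + u) - s\<^sup>2 * u \<le> - ((s * u)\<^sup>2 / (2 * (1 + u)))" by simp
  define y where "y = s * u"
  have y: "0 \<le> y" "u \<le> y" unfolding y_def using s u by (simp_all add: mult_le_cancel_right1)
  have "y / 4 - 2 \<le> y\<^sup>2 / (2 * (1 + u))"
  proof (cases "y \<le> 8")
    case True
    moreover have "0 \<le> y\<^sup>2 / (2 * (1 + u))" using u by simp
    ultimately show ?thesis by linarith
  next
    case False
    then have "y / 4 \<le> y\<^sup>2 / (2 * (1 + y))" by (simp add: field_simps power2_eq_square)
    also have "\<dots> \<le> y\<^sup>2 / (2 * (1 + u))" using y u by (intro divide_left_mono) auto
    finally show ?thesis by linarith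
  qed
  then show ?thesis using E y unfolding y_def by simp
qed

lemma log_profile_bound_neg:
  assumes s: "s\<^sup>2 \<ge> (2::real)" and u: "-1 < u" "u < 0"
  shows "(s\<^sup>2 - 1) * ln (1 + u) - s\<^sup>2 * u \<le> 2 - \<bar>s * u\<bar> / 4"
proof -
  have "(s\<^sup>2 - 1) * ln (1 + u) \<le> (s\<^sup>2 - 1) * (u - u\<^sup>2 / 2)"
    using ln_le_quadratic[of "1 + u"] u s by (intro mult_left_mono) auto
  then have E: "(s\<^sup>2 - 1) * ln (1 + u) - s\<^sup>2 * u \<le> - u - (s\<^sup>2 - 1) * u\<^sup>2 / 2"
    by (simp add: algebra_simps)
  have "(s\<^sup>2 / 2) * u\<^sup>2 \<le> (s\<^sup>2 - 1) * u\<^sup>2" using s by (intro mult_right_mono) auto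
  then have "(s * u)\<^sup>2 / 4 \<le> (s\<^sup>2 - 1) * u\<^sup>2 / 2" by (simp add: power_mult_distrib)
  moreover have "1 - (s * u)\<^sup>2 / 4 \<le> 2 - \<bar>s * u\<bar> / 4"
    using zero_le_power2[of "\<bar>s * u\<bar> / 2 - 1 / 4"] by (simp add: power2_eq_square field_simps)
  ultimately show ?thesis using E u by linarith
qed

definition chi_sq_profile :: "real \<Rightarrow> real \<Rightarrow> real" where
  "chi_sq_profile m y =
     (if 0 < 1 + y / sqrt m then (1 + y / sqrt m) powr (m - 1) * exp (- (sqrt m * y)) else 0)"

lemma chi_sq_profile_nonneg: "chi_sq_profile m y \<ge> 0"
  unfolding chi_sq_profile_def by simp

lemma borel_measurable_chi_sq_profile [measurable]: "chi_sq_profile m \<in> borel_measurable borel"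
  unfolding chi_sq_profile_def by measurable

lemma chi_sq_profile_le:
  assumes m: "m \<ge> 2"
  shows "chi_sq_profile m y \<le> exp (2 - \<bar>y\<bar> / 4)"
proof (cases "0 < 1 + y / sqrt m")
  case True
  define s where "s = sqrt m"
  define u where "u = y / s"
  have s: "s\<^sup>2 = m" "s \<ge> 1" unfolding s_def using m by simp_all
  have y: "y = s * u" unfolding u_def using s by simp
  have u: "0 < 1 + u" using True unfolding u_def s_def .
  have "chi_sq_profile m y = (1 + u) powr (m - 1) * exp (- (s * y))"
    unfolding chi_sq_profile_def u_def s_def using True by simp
  also have "(1 + u) powr (m - 1) = exp ((m - 1) * ln (1 + u))" using u by (simp add: powr_def)
  also have "s * y = s\<^sup>2 * u" using y by (simp add: power2_eq_square)
  also have "exp ((m - 1) * ln (1 + u)) * exp (- (s\<^sup>2 * u)) = exp ((s\<^sup>2 - 1) * ln (1 + u) - s\<^sup>2 * u)"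
    unfolding s(1) by (simp flip: exp_add)
  also have "\<dots> \<le> exp (2 - \<bar>y\<bar> / 4)"
    using log_profile_bound_nonneg[OF s(2), of u] log_profile_bound_neg[of s u] m u s unfolding y
    by (cases "u \<ge> 0") auto
  finally show ?thesis .
qed (simp add: chi_sq_profile_def)

definition chi_sq_profile_const :: "real \<Rightarrow> real" where
  "chi_sq_profile_const m = 2 * sqrt m * (2 * m) powr (m - 1) * exp (- m) / (2 powr m * Gamma m)"

lemma chi_sq_density_standardized:
  assumes f: "f > 0"
  shows "sqrt (2 * f) * chi_sq_density f (f + sqrt (2 * f) * y)
    = chi_sq_profile_const (f / 2) * chi_sq_profile (f / 2) y"
proof -
  define m where "m = f / 2"
  define r where "r = sqrt m"
  have m: "m > 0" "f = 2 * m" and r: "r > 0" "r * r = m"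
    unfolding r_def m_def using f by auto
  have sq: "sqrt (2 * f) = 2 * r" unfolding m(2) r_def by (simp add: real_sqrt_mult)
  have t: "f + sqrt (2 * f) * y = 2 * m * (1 + y / r)" using m r sq by (simp add: field_simps)
  show ?thesis
  proof (cases "0 < 1 + y / r")
    case True
    have pw: "(2 * m * (1 + y / r)) powr (m - 1) = (2 * m) powr (m - 1) * (1 + y / r) powr (m - 1)"
      using True m powr_mult[of "2 * m" "1 + y / r" "m - 1"] by simp
    have ex: "exp (- (2 * m * (1 + y / r)) / 2) = exp (- m) * exp (- (r * y))"
    proof -
      have e: "- (2 * m * (1 + y / r)) / 2 = - m + - (r * y)" using r by (simp add: field_simps)
      show ?thesis unfolding e by (rule exp_add)
    qed
    have "sqrt (2 * f) * chi_sq_density f (f + sqrt (2 * f) * y)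
        = 2 * r * chi_sq_density f (2 * m * (1 + y / r))"
      by (simp only: t) (simp only: sq)
    also have "chi_sq_density f (2 * m * (1 + y / r))
        = (2 * m * (1 + y / r)) powr (m - 1) * exp (- (2 * m * (1 + y / r)) / 2) / (2 powr m * Gamma m)"
      unfolding chi_sq_density_def m_def[symmetric] using True m by simp
    also have "\<dots> = (2 * m) powr (m - 1) * (1 + y / r) powr (m - 1) * (exp (- m) * exp (- (r * y)))
        / (2 powr m * Gamma m)"
      by (simp only: pw ex)
    also have "2 * r * ((2 * m) powr (m - 1) * (1 + y / r) powr (m - 1) * (exp (- m) * exp (- (r * y)))
        / (2 powr m * Gamma m)) = chi_sq_profile_const m * chi_sq_profile m y"
      unfolding chi_sq_profile_const_def chi_sq_profile_def r_def[symmetric]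
      using True by (simp add: field_simps)
    finally show ?thesis unfolding m_def .
  next
    case False
    then have "\<not> 0 < f + sqrt (2 * f) * y" unfolding t using m by (simp add: zero_less_mult_iff)
    then show ?thesis
      unfolding chi_sq_density_def chi_sq_profile_def m_def[symmetric] r_def[symmetric] using False by simp
  qed
qed

lemma integral_chi_sq_density_standardized:
  assumes f: "f > 0" and [measurable]: "g \<in> borel_measurable borel"
  shows "(\<integral>t. g t * chi_sq_density f t \<partial>lborel)
    = chi_sq_profile_const (f / 2) * (\<integral>y. g (f + sqrt (2 * f) * y) * chi_sq_profile (f / 2) y \<partial>lborel)"
proof -
  define c where "c = sqrt (2 * f)"
  have c: "c > 0" unfolding c_def using f by simp
  have "(\<integral>t. g t * chi_sq_density f t \<partial>lborel)
      = c * (\<integral>y. g (f + c * y) * chi_sq_density f (f + c * y) \<partial>lborel)"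
    using lborel_integral_real_affine[where c = c and t = f and f = "\<lambda>t. g t * chi_sq_density f t"] c
    by simp
  also have "\<dots> = (\<integral>y. g (f + c * y) * (c * chi_sq_density f (f + c * y)) \<partial>lborel)"
    by (simp only: mult.left_commute flip: integral_mult_right_zero)
  also have "\<dots> = (\<integral>y. chi_sq_profile_const (f / 2) * (g (f + c * y) * chi_sq_profile (f / 2) y) \<partial>lborel)"
    unfolding chi_sq_density_standardized[OF f, folded c_def] by (simp only: mult.left_commute)
  finally show ?thesis unfolding c_def by simp
qed

lemma cdf_K_law_eq_profile_ratio:
  assumes f: "f > 0"
  shows "cdf (K_law f) x = (\<integral>y. indicator {..x} y * chi_sq_profile (f / 2) y \<partial>lborel)
    / (\<integral>y. chi_sq_profile (f / 2) y \<partial>lborel)"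
proof -
  define C I0 I1 where "C = chi_sq_profile_const (f / 2)"
    and "I0 = (\<integral>y. chi_sq_profile (f / 2) y \<partial>lborel)"
    and "I1 = (\<integral>y. indicator {..x} y * chi_sq_profile (f / 2) y \<partial>lborel)"
  have norm: "C * I0 = 1"
    using integral_chi_sq_density_standardized[OF f, of "\<lambda>_. 1"] integral_chi_sq_density[OF f]
    unfolding C_def I0_def by simp
  have "indicator {..f + x * sqrt (2 * f)} (f + sqrt (2 * f) * y) = (indicator {..x} y :: real)" for y
    using f by (simp add: indicator_def mult.commute)
  then have "cdf (K_law f) x = C * I1"
    unfolding cdf_K_law[OF f] C_def I1_def by (subst integral_chi_sq_density_standardized[OF f]) simp_all
  moreover have "I0 \<noteq> 0" using norm by auto
  ultimately have "cdf (K_law f) x = (C * I0) * I1 / I0" by simp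
  also have "\<dots> = I1 / I0" unfolding norm by simp
  finally show ?thesis unfolding I0_def I1_def .
qed

lemma tendsto_chi_sq_profile: "((\<lambda>m. chi_sq_profile m y) \<longlongrightarrow> exp (- y\<^sup>2 / 2)) at_top"
proof -
  have "((\<lambda>m::real. exp ((m - 1) * ln (1 + y / sqrt m) - sqrt m * y)) \<longlongrightarrow> exp (- (y * y / 2))) at_top"
    by real_asymp
  then have "((\<lambda>m::real. exp ((m - 1) * ln (1 + y / sqrt m) - sqrt m * y)) \<longlongrightarrow> exp (- y\<^sup>2 / 2)) at_top"
    by (simp add: power2_eq_square)
  moreover have "eventually (\<lambda>m. 0 < 1 + y / sqrt m) at_top"
    by real_asymp
  then have "eventually (\<lambda>m. exp ((m - 1) * ln (1 + y / sqrt m) - sqrt m * y) = chi_sq_profile m y) at_top"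
  proof eventually_elim
    case (elim m)
    have "exp ((m - 1) * ln (1 + y / sqrt m) - sqrt m * y)
        = exp ((m - 1) * ln (1 + y / sqrt m)) * exp (- (sqrt m * y))"
      by (simp add: exp_add[symmetric])
    then show ?case unfolding chi_sq_profile_def using elim by (simp add: powr_def)
  qed
  ultimately show ?thesis by (rule Lim_transform_eventually)
qed

lemma integrable_exp_minus_abs:
  fixes c :: real
  assumes c: "c > 0"
  shows "integrable lborel (\<lambda>y. exp (- c * \<bar>y\<bar>))"
proof -
  have "emeasure (density lborel (exponential_density c)) (space lborel) = 1"
    using prob_space.emeasure_space_1[OF prob_space_exponential_density[OF c]] by simp
  then have "(\<integral>\<^sup>+ x. ennreal (exponential_density c x) \<partial>lborel) = 1"
    by (subst (asm) emeasure_density) auto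
  then have ed: "integrable lborel (exponential_density c)"
    using exponential_density_nonneg[OF c] by (intro integrableI_nonneg) auto
  have "integrable lborel (\<lambda>y. (exponential_density c y + exponential_density c (- y)) / c)"
    using lborel_integrable_real_affine[OF ed, of "-1" 0] ed by (intro integrable_divide) auto
  then show ?thesis
    by (rule Bochner_Integration.integrable_bound) (use c in \<open>auto simp: exponential_density_def\<close>)
qed

lemma tendsto_integral_chi_sq_profile:
  assumes [measurable]: "g \<in> borel_measurable borel" and g: "\<And>y. \<bar>g y\<bar> \<le> 1"
  shows "((\<lambda>m. \<integral>y. g y * chi_sq_profile m y \<partial>lborel) \<longlongrightarrow> (\<integral>y. g y * exp (- y\<^sup>2 / 2) \<partial>lborel)) at_top"
proof (rule integral_dominated_convergence_at_top[where w = "\<lambda>y. exp (2 - \<bar>y\<bar> / 4)"])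
  show "AE y in lborel. ((\<lambda>m. g y * chi_sq_profile m y) \<longlongrightarrow> g y * exp (- y\<^sup>2 / 2)) at_top"
    by (intro AE_I2 tendsto_mult_left tendsto_chi_sq_profile)
  have bound: "\<bar>g y\<bar> * chi_sq_profile m y \<le> 1 * exp (2 - \<bar>y\<bar> / 4)" if "m \<ge> 2" for m y
    using g chi_sq_profile_le[OF that] chi_sq_profile_nonneg[of m y] by (intro mult_mono) auto
  show "\<forall>\<^sub>F m in at_top. AE y in lborel. norm (g y * chi_sq_profile m y) \<le> exp (2 - \<bar>y\<bar> / 4)"
    using eventually_ge_at_top[of "2::real"]
    by eventually_elim (use bound in \<open>auto simp: abs_mult chi_sq_profile_nonneg\<close>)
  have "integrable lborel (\<lambda>y::real. exp 2 * exp (- (1 / 4) * \<bar>y\<bar>))"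
    by (intro integrable_mult_right integrable_exp_minus_abs) simp
  moreover have "exp (2 - \<bar>y\<bar> / 4) = exp 2 * exp (- (1 / 4) * \<bar>y\<bar>)" for y :: real
    by (simp flip: exp_add)
  ultimately show "integrable lborel (\<lambda>y::real. exp (2 - \<bar>y\<bar> / 4))" by simp
qed auto

lemma cdf_K_law_tendsto_std_normal:
  assumes F: "filterlim F at_top sequentially" and F_pos: "\<And>k. F k > 0"
  shows "(\<lambda>k. cdf (K_law (F k)) x) \<longlonglongrightarrow> cdf std_normal_distribution x"
proof -
  have gauss: "exp (- (y\<^sup>2 / 2)) = sqrt (2 * pi) * std_normal_density y" for y
    unfolding std_normal_density_def by simp
  have "(\<integral>y. indicator {..x} y * exp (- y\<^sup>2 / 2) \<partial>lborel)
      = (\<integral>y. sqrt (2 * pi) * (indicator {..x} y * std_normal_density y) \<partial>lborel)"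
    by (intro Bochner_Integration.integral_cong) (auto simp: gauss)
  also have "\<dots> = sqrt (2 * pi) * cdf std_normal_distribution x"
    unfolding integral_mult_right_zero by (subst cdf_density_lborel) auto
  finally have "((\<lambda>m. (\<integral>y. indicator {..x} y * chi_sq_profile m y \<partial>lborel) / (\<integral>y. chi_sq_profile m y \<partial>lborel))
      \<longlongrightarrow> sqrt (2 * pi) * cdf std_normal_distribution x / sqrt (2 * pi)) at_top"
    using tendsto_divide[OF tendsto_integral_chi_sq_profile[of "indicator {..x}"]
        tendsto_integral_chi_sq_profile[of "\<lambda>_. 1"]]
    by (simp add: gauss)
  then have ratio: "((\<lambda>m. (\<integral>y. indicator {..x} y * chi_sq_profile m y \<partial>lborel) / (\<integral>y. chi_sq_profile m y \<partial>lborel))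
      \<longlongrightarrow> cdf std_normal_distribution x) at_top"
    by simp
  have "filterlim (\<lambda>k. F k / 2) at_top sequentially"
    using filterlim_at_top_mult_tendsto_pos[OF tendsto_const[of "1/2::real"] _ F] by simp
  from filterlim_compose[OF ratio this] show ?thesis
    unfolding cdf_K_law_eq_profile_ratio[OF F_pos] by simp
qed

lemma weak_conv_m_K_law_std_normal:
  "filterlim F at_top sequentially \<Longrightarrow> (\<And>k. F k > 0) \<Longrightarrow>
    weak_conv_m (\<lambda>k. K_law (F k)) std_normal_distribution"
  unfolding weak_conv_m_def weak_conv_def using cdf_K_law_tendsto_std_normal by blast

theorem theorem4p1:
  fixes a d :: "nat \<Rightarrow> nat" and n :: "nat \<Rightarrow> nat \<Rightarrow> nat" and \<rho> :: "nat \<Rightarrow> real"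
    and Sig :: "nat \<Rightarrow> nat \<Rightarrow> real mat" and mu :: "nat \<Rightarrow> nat \<Rightarrow> real vec"
    and TW TS :: "nat \<Rightarrow> real mat"
  assumes a_pos: "\<And>k. a k \<ge> 1" and d_pos: "\<And>k. d k \<ge> 1"
    and n_pos: "\<And>k i. i < a k \<Longrightarrow> n k i \<ge> 1"
    and Sig: "\<And>k i. i < a k \<Longrightarrow> pos_def_mat (d k) (Sig k i)"
    and mu: "\<And>k i. i < a k \<Longrightarrow> mu k i \<in> carrier_vec (d k)"
    and TW: "\<And>k. sym_idempotent (a k) (TW k)"
    and TS: "\<And>k. sym_idempotent (d k) (TS k)"
    and T_nonzero: "\<And>k. kron (TW k) (TS k) \<noteq> 0\<^sub>m (a k * d k) (a k * d k)"
    and H0: "\<And>k. kron (TW k) (TS k) *\<^sub>v stack_vec (a k) (d k) (mu k) = 0\<^sub>v (a k * d k)"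
    and N_lim: "filterlim (\<lambda>k. \<Sum>i<a k. n k i) at_top sequentially"
    and rho: "\<And>i. (\<forall>\<^sub>F k in sequentially. i < a k) \<Longrightarrow>
               ((\<lambda>k. real (n k i) / real (\<Sum>j<a k. n k j)) \<longlonglongrightarrow> \<rho> i) \<and> 0 < \<rho> i \<and> \<rho> i < 1"
    and frameworks:
      "((\<exists>a0. \<forall>k. a k = a0) \<and> filterlim d at_top sequentially
           \<and> filterlim (\<lambda>k. Min (n k ` {..<a k})) at_top sequentially)
     \<or> ((\<exists>d0. \<forall>k. d k = d0) \<and> filterlim a at_top sequentially
           \<and> filterlim (\<lambda>k. Min (n k ` {..<a k})) at_top sequentially)
     \<or> (filterlim a at_top sequentially \<and> filterlim d at_top sequentially
           \<and> filterlim (\<lambda>k. Min (n k ` {..<a k})) at_top sequentially)"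
  shows "((\<lambda>k. beta1 (kron (TW k) (TS k) * V_mat (a k) (n k) (Sig k) * kron (TW k) (TS k)))
              \<longlonglongrightarrow> 0
          \<longrightarrow> weak_conv_m (\<lambda>k. K_law (f_P (kron (TW k) (TS k)) (V_mat (a k) (n k) (Sig k))))
                std_normal_distribution)
       \<and> ((\<lambda>k. beta1 (kron (TW k) (TS k) * V_mat (a k) (n k) (Sig k) * kron (TW k) (TS k)))
              \<longlonglongrightarrow> 1
          \<longrightarrow> weak_conv_m (\<lambda>k. K_law (f_P (kron (TW k) (TS k)) (V_mat (a k) (n k) (Sig k))))
                (distr (chi_sq_law 1) borel (\<lambda>x. (x - 1) / sqrt 2)))"
proof -
  define P where "P k = kron (TW k) (TS k)" for k
  define V where "V k = V_mat (a k) (n k) (Sig k)" for k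
  define \<beta> where "\<beta> k = beta1 (P k * V k * P k)" for k
  define f where "f k = f_P (P k) (V k)" for k
  have bounds: "0 < \<beta> k" "1 / (\<beta> k)\<^sup>2 \<le> f k" "f k \<le> 1 / (\<beta> k) ^ 6" for k
    using beta1_f_P_bounds[OF sym_idempotent_kron[OF TW TS] T_nonzero pos_def_mat_V_mat[OF Sig n_pos]]
    unfolding \<beta>_def f_def P_def V_def by auto
  have f_pos: "f k > 0" for k
  proof -
    have "0 < 1 / (\<beta> k)\<^sup>2" using bounds(1)[of k] by simp
    then show ?thesis using bounds(2)[of k] by linarith
  qed
  have normal: "weak_conv_m (\<lambda>k. K_law (f k)) std_normal_distribution" if "\<beta> \<longlonglongrightarrow> 0"
    by (rule weak_conv_m_K_law_std_normal[OF filterlim_at_top_if_inverse_square_le[OF that bounds(1,2)] f_pos])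
  have chi_sq: "weak_conv_m (\<lambda>k. K_law (f k)) (K_law 1)" if "\<beta> \<longlonglongrightarrow> 1"
    by (rule weak_conv_m_K_law[OF tendsto_one_if_between_inverse_powers[OF that bounds(2,3)] _ f_pos]) simp
  have "distr (chi_sq_law 1) borel (\<lambda>x. (x - 1) / sqrt 2) = K_law 1"
    unfolding K_law_def by simp
  then show ?thesis using normal chi_sq unfolding \<beta>_def f_def P_def V_def by auto
qed

end
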